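(* Let $A=[D,\boldsymbol n,\dots,\boldsymbol n]\in\mathbb Z^{\ell\times(\ell+k)}$ be a Type I$_k$ weight matrix such that $V_A$ is a faithful $\mathbb T^\ell$-module, and write $\alpha=\alpha(A)$, $m_i=m_i(A)$, $\eta=\eta(A)$. Then the algebra of $\mathbb T^\ell$-invariant polynomials in $z_1,\dots,z_{\ell+k},\overline{z_1},\dots,\overline{z_{\ell+k}}$ with complex coefficients (equivalently, via real and imaginary parts, $\mathbb R[V_A]^{\mathbb T^\ell}$) is generated by: (1) the $\ell$ quadratics $r_i=z_i\overline{z_i}$, $1\le i\le\ell$; (2) the $k^2$ quadratics $p_{i,j}=z_{\ell+i}\overline{z_{\ell+j}}$, $1\le i,j\le k$; (3) the $\binom{\alpha+k-1}{k-1}$ monomials $q_{\boldsymbol s}=\prod_{i=1}^\ell z_i^{m_i}\prod_{i=1}^kz_{\ell+i}^{s_i}$ of degree $\eta$, for $\boldsymbol s=(s_1,\dots,s_k)\in\mathbb Z_{\ge0}^k$ with $\sum_is_i=\alpha$; (4) their conjugates $\overline{q_{\boldsymbol s}}$. Moreover, $\mathbb R[M_0(A)]$ (complexified) is generated by the images of the generators in (2), (3), (4).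
   Context: For $A=(a_{ij})\in\mathbb Z^{\ell\times n}$ with columns $\boldsymbol a_j$, $V_A=\mathbb C^n$ (coordinates $z_j$) with $\mathbb T^\ell$ acting by $z_j\mapsto\boldsymbol t^{\boldsymbol a_j}z_j$, $\boldsymbol t^{\boldsymbol a_j}=\prod_it_i^{a_{ij}}$; faithful = effective. Moment map $J_i=\tfrac12\sum_ja_{ij}z_j\overline{z_j}$, $Z_A=J_A^{-1}(0)$, $M_0(A)=Z_A/\mathbb T^\ell$, $\mathbb R[M_0(A)]=\mathbb R[V_A]^{\mathbb T^\ell}/(\text{invariant polynomials vanishing on }Z_A)$. Type I$_k$: $A=[D,\boldsymbol n,\dots,\boldsymbol n]$ ($k$ copies of $\boldsymbol n$) with $D=\operatorname{diag}(-a_1,\dots,-a_\ell)$, $a_i>0$, $\boldsymbol n=(n_1,\dots,n_\ell)^T$, $n_i>0$. $\alpha(A)=\operatorname{lcm}(a_1,\dots,a_\ell)$, $m_i(A)=n_i\alpha(A)/a_i$, $\beta(A)=\sum_im_i(A)$, $\eta(A)=\alpha(A)+\beta(A)$. *)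

theory Defs
  imports "HOL-Analysis.Analysis" "HOL-Library.Poly_Mapping"
begin

(* Variables of the polynomial ring C[z_j, conj z_j]: Inl j stands for z_j, Inr j for conj(z_j).
   Indices are 0-based: z_0..z_{l+k-1}. *)
type_synonym cpoly = "((nat + nat) \<Rightarrow>\<^sub>0 nat) \<Rightarrow>\<^sub>0 complex"

definition var_idx :: "nat + nat \<Rightarrow> nat" where
  "var_idx x = (case x of Inl j \<Rightarrow> j | Inr j \<Rightarrow> j)"

definition Var :: "nat + nat \<Rightarrow> cpoly" where
  "Var x = Poly_Mapping.single (Poly_Mapping.single x 1) 1"

definition Const :: "complex \<Rightarrow> cpoly" where
  "Const c = Poly_Mapping.single 0 c"

definition var_val :: "(nat \<Rightarrow> complex) \<Rightarrow> nat + nat \<Rightarrow> complex" where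
  "var_val z x = (case x of Inl j \<Rightarrow> z j | Inr j \<Rightarrow> cnj (z j))"

definition peval :: "cpoly \<Rightarrow> (nat \<Rightarrow> complex) \<Rightarrow> complex" where
  "peval f z = (\<Sum>m\<in>Poly_Mapping.keys f. Poly_Mapping.lookup f m * (\<Prod>x\<in>Poly_Mapping.keys (m :: (nat + nat) \<Rightarrow>\<^sub>0 nat). var_val z x ^ Poly_Mapping.lookup m x))"

definition in_vars :: "nat \<Rightarrow> cpoly \<Rightarrow> bool" where
  "in_vars n f \<longleftrightarrow> (\<forall>m\<in>Poly_Mapping.keys f. \<forall>x\<in>Poly_Mapping.keys m. var_idx x < n)"

definition in_torus :: "nat \<Rightarrow> (nat \<Rightarrow> complex) \<Rightarrow> bool" where
  "in_torus l t \<longleftrightarrow> (\<forall>i<l. cmod (t i) = 1)"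

definition tchar :: "(nat \<Rightarrow> nat \<Rightarrow> int) \<Rightarrow> nat \<Rightarrow> (nat \<Rightarrow> complex) \<Rightarrow> nat \<Rightarrow> complex" where
  "tchar A l t j = (\<Prod>i<l. t i powi A i j)"

definition act :: "(nat \<Rightarrow> nat \<Rightarrow> int) \<Rightarrow> nat \<Rightarrow> (nat \<Rightarrow> complex) \<Rightarrow> (nat \<Rightarrow> complex) \<Rightarrow> nat \<Rightarrow> complex" where
  "act A l t z j = tchar A l t j * z j"

definition faithful :: "(nat \<Rightarrow> nat \<Rightarrow> int) \<Rightarrow> nat \<Rightarrow> nat \<Rightarrow> bool" where
  "faithful A l n \<longleftrightarrow> (\<forall>t. in_torus l t \<longrightarrow> (\<forall>j<n. tchar A l t j = 1) \<longrightarrow> (\<forall>i<l. t i = 1))"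

definition inv_polys :: "(nat \<Rightarrow> nat \<Rightarrow> int) \<Rightarrow> nat \<Rightarrow> nat \<Rightarrow> cpoly set" where
  "inv_polys A l n = {f. in_vars n f \<and>
      (\<forall>t z. in_torus l t \<longrightarrow> peval f (act A l t z) = peval f z)}"

(* zero fibre of the moment map, Z_A, inside V_A = C^n *)
definition zero_fibre :: "(nat \<Rightarrow> nat \<Rightarrow> int) \<Rightarrow> nat \<Rightarrow> nat \<Rightarrow> (nat \<Rightarrow> complex) set" where
  "zero_fibre A l n = {z. (\<forall>j\<ge>n. z j = 0) \<and>
      (\<forall>i<l. (1/2) * (\<Sum>j<n. of_int (A i j) * (cmod (z j))\<^sup>2) = 0)}"

inductive_set gen_alg :: "cpoly set \<Rightarrow> cpoly set" for G where
  const: "Const c \<in> gen_alg G"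
| gen: "g \<in> G \<Longrightarrow> g \<in> gen_alg G"
| add: "f \<in> gen_alg G \<Longrightarrow> g \<in> gen_alg G \<Longrightarrow> f + g \<in> gen_alg G"
| mult: "f \<in> gen_alg G \<Longrightarrow> g \<in> gen_alg G \<Longrightarrow> f * g \<in> gen_alg G"

definition typeI :: "(nat \<Rightarrow> nat) \<Rightarrow> (nat \<Rightarrow> nat) \<Rightarrow> nat \<Rightarrow> nat \<Rightarrow> nat \<Rightarrow> int" where
  "typeI a nv l i j = (if j < l then (if i = j then - int (a i) else 0) else int (nv i))"

definition alphaA :: "(nat \<Rightarrow> nat) \<Rightarrow> nat \<Rightarrow> nat" where
  "alphaA a l = Lcm (a ` {..<l})"

definition mA :: "(nat \<Rightarrow> nat) \<Rightarrow> (nat \<Rightarrow> nat) \<Rightarrow> nat \<Rightarrow> nat \<Rightarrow> nat" where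
  "mA a nv l i = nv i * alphaA a l div a i"

definition betaA :: "(nat \<Rightarrow> nat) \<Rightarrow> (nat \<Rightarrow> nat) \<Rightarrow> nat \<Rightarrow> nat" where
  "betaA a nv l = (\<Sum>i<l. mA a nv l i)"

definition etaA :: "(nat \<Rightarrow> nat) \<Rightarrow> (nat \<Rightarrow> nat) \<Rightarrow> nat \<Rightarrow> nat" where
  "etaA a nv l = alphaA a l + betaA a nv l"

definition gens_r :: "nat \<Rightarrow> cpoly set" where
  "gens_r l = {Var (Inl i) * Var (Inr i) | i. i < l}"

definition gens_p :: "nat \<Rightarrow> nat \<Rightarrow> cpoly set" where
  "gens_p l k = {Var (Inl (l + i)) * Var (Inr (l + j)) | i j. i < k \<and> j < k}"

definition svecs :: "nat \<Rightarrow> nat \<Rightarrow> (nat \<Rightarrow> nat) set" where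
  "svecs k alpha = {s. (\<forall>i\<ge>k. s i = 0) \<and> (\<Sum>i<k. s i) = alpha}"

(* q_s for side = Inl, conj(q_s) for side = Inr *)
definition qmono :: "(nat \<Rightarrow> nat + nat) \<Rightarrow> (nat \<Rightarrow> nat) \<Rightarrow> (nat \<Rightarrow> nat) \<Rightarrow> nat \<Rightarrow> nat \<Rightarrow> (nat \<Rightarrow> nat) \<Rightarrow> cpoly" where
  "qmono side a nv l k s = (\<Prod>i<l. Var (side i) ^ mA a nv l i) * (\<Prod>i<k. Var (side (l + i)) ^ s i)"

definition gens_q :: "(nat \<Rightarrow> nat) \<Rightarrow> (nat \<Rightarrow> nat) \<Rightarrow> nat \<Rightarrow> nat \<Rightarrow> cpoly set" where
  "gens_q a nv l k = qmono Inl a nv l k ` svecs k (alphaA a l)"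

definition gens_qbar :: "(nat \<Rightarrow> nat) \<Rightarrow> (nat \<Rightarrow> nat) \<Rightarrow> nat \<Rightarrow> nat \<Rightarrow> cpoly set" where
  "gens_qbar a nv l k = qmono Inr a nv l k ` svecs k (alphaA a l)"

end

theory Submission
  imports Defs "HOL-Computational_Algebra.Polynomial"
begin

text \<open>The torus acts diagonally, so it multiplies the monomial \<open>z\<^sup>e \<bar>z\<^sup>f\<close> by the character
  \<open>t\<^bsup>A(e - f)\<^esup>\<close>. Distinct monomials are linearly independent as functions of \<open>z\<close> (Kronecker
  substitution reduces this to one variable \<open>w\<close> and its conjugate), so a polynomial is invariant
  iff each of its monomials has weight \<open>A(e - f) = 0\<close>. For Type \<open>I\<^sub>k\<close> the weight equations read
  \<open>a\<^sub>i (e\<^sub>i - f\<^sub>i) = n\<^sub>i S\<close> with \<open>S = \<Sum>\<^sub>j (e\<^sub>l\<^sub>+\<^sub>j - f\<^sub>l\<^sub>+\<^sub>j)\<close>, and faithfulness forces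
  \<open>gcd(a\<^sub>i, n\<^sub>i) = 1\<close>. Hence an invariant monomial with \<open>S > 0\<close> is divisible by some \<open>q\<^sub>s\<close>, one
  with \<open>S < 0\<close> by some \<open>\<bar>q\<^sub>s\<close>, and one with \<open>S = 0\<close> by some \<open>r\<^sub>i\<close> or \<open>p\<^sub>i\<^sub>,\<^sub>j\<close>; dividing out and
  inducting on the degree shows that the invariant monomials are generated. On the zero fibre
  \<open>|z\<^sub>i|\<^sup>2 = (n\<^sub>i / a\<^sub>i) \<Sum>\<^sub>j |z\<^sub>l\<^sub>+\<^sub>j|\<^sup>2\<close>, which eliminates the \<open>r\<^sub>i\<close>.\<close>

section \<open>Evaluation of polynomials in \<open>z\<close> and \<open>\<bar>z\<close>\<close>

definition mon_eval :: "((nat + nat) \<Rightarrow>\<^sub>0 nat) \<Rightarrow> (nat \<Rightarrow> complex) \<Rightarrow> complex" where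
  "mon_eval m z = (\<Prod>x\<in>Poly_Mapping.keys m. var_val z x ^ Poly_Mapping.lookup m x)"

lemma mon_eval_superset:
  assumes "finite S" "Poly_Mapping.keys m \<subseteq> S"
  shows "mon_eval m z = (\<Prod>x\<in>S. var_val z x ^ Poly_Mapping.lookup m x)"
  unfolding mon_eval_def
  by (rule prod.mono_neutral_left[OF assms]) (auto simp: in_keys_iff)

lemma mon_eval_add: "mon_eval (m + m') z = mon_eval m z * mon_eval m' z"
proof -
  let ?S = "Poly_Mapping.keys m \<union> Poly_Mapping.keys m'"
  have "mon_eval (m + m') z = (\<Prod>x\<in>?S. var_val z x ^ Poly_Mapping.lookup (m + m') x)"
    by (rule mon_eval_superset[OF _ keys_add]) simp
  also have "\<dots> = (\<Prod>x\<in>?S. var_val z x ^ Poly_Mapping.lookup m x) *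
                  (\<Prod>x\<in>?S. var_val z x ^ Poly_Mapping.lookup m' x)"
    by (simp add: lookup_add power_add prod.distrib)
  also have "\<dots> = mon_eval m z * mon_eval m' z"
    using mon_eval_superset[of ?S m z] mon_eval_superset[of ?S m' z] by simp
  finally show ?thesis .
qed

lemma peval_eq_sum: "peval f z = (\<Sum>m\<in>Poly_Mapping.keys f. Poly_Mapping.lookup f m * mon_eval m z)"
  by (simp add: peval_def mon_eval_def)

lemma peval_add: "peval (f + g) z = peval f z + peval g z"
  unfolding peval_eq_sum by (rule setsum_keys_plus_distrib) (simp_all add: distrib_right)

lemma peval_zero [simp]: "peval 0 z = 0"
  by (simp add: peval_def)

lemma peval_sum: "peval (\<Sum>i\<in>I. f i) z = (\<Sum>i\<in>I. peval (f i) z)"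
  by (induction I rule: infinite_finite_induct) (auto simp: peval_add)

lemma peval_single: "peval (Poly_Mapping.single m c) z = c * mon_eval m z"
  by (simp add: peval_eq_sum)

lemma sum_single_lookup: "(\<Sum>m\<in>Poly_Mapping.keys f. Poly_Mapping.single m (Poly_Mapping.lookup f m)) = f"
  by (rule poly_mapping_eqI)
    (auto simp: lookup_sum lookup_single when_def in_keys_iff sum.delta')

lemma peval_mult: "peval (f * g) z = peval f z * peval g z"
proof -
  let ?F = "Poly_Mapping.keys f" and ?G = "Poly_Mapping.keys g"
  have "f * g = (\<Sum>m\<in>?F. Poly_Mapping.single m (Poly_Mapping.lookup f m)) *
                (\<Sum>m'\<in>?G. Poly_Mapping.single m' (Poly_Mapping.lookup g m'))"
    by (simp add: sum_single_lookup)
  also have "\<dots> = (\<Sum>m\<in>?F. \<Sum>m'\<in>?G.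
      Poly_Mapping.single (m + m') (Poly_Mapping.lookup f m * Poly_Mapping.lookup g m'))"
    by (simp add: sum_distrib_left sum_distrib_right mult_single) (rule sum.swap)
  finally have "peval (f * g) z = (\<Sum>m\<in>?F. \<Sum>m'\<in>?G.
      Poly_Mapping.lookup f m * Poly_Mapping.lookup g m' * (mon_eval m z * mon_eval m' z))"
    by (simp add: peval_sum peval_single mon_eval_add)
  then show ?thesis
    unfolding peval_eq_sum sum_product by (simp add: mult_ac)
qed

lemma peval_Const [simp]: "peval (Const c) z = c"
  by (simp add: Const_def peval_single mon_eval_def)

lemma peval_Var [simp]: "peval (Var x) z = var_val z x"
  by (simp add: Var_def peval_single mon_eval_def)

section \<open>Linear independence of the monomial functions\<close>

lemma infinite_unit_circle: "infinite {u::complex. cmod u = 1}"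
proof
  assume "finite {u::complex. cmod u = 1}"
  moreover have "cis ` {0..pi} \<subseteq> {u. cmod u = 1}" by auto
  ultimately have "finite (cis ` {0..pi})" by (rule finite_subset[rotated])
  moreover have "inj_on cis {0..pi}"
  proof (rule inj_onI)
    fix x y assume "x \<in> {0..pi}" "y \<in> {0..pi}" "cis x = cis y"
    then show "x = y" using cos_inj_pi by (metis atLeastAtMost_iff cis.sel(1))
  qed
  ultimately have "finite {0..pi}" by (rule finite_imageD)
  then show False using infinite_Icc[of 0 pi] pi_gt_zero by simp
qed

lemma coeffs_eq_0_if_infinitely_many_roots:
  fixes c :: "nat \<Rightarrow> 'a::idom"
  assumes "finite F" "infinite R" "\<And>x. x \<in> R \<Longrightarrow> (\<Sum>k\<in>F. c k * x ^ k) = 0" "k \<in> F"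
  shows "c k = 0"
proof -
  define p where "p = (\<Sum>k\<in>F. monom (c k) k)"
  have "p = 0"
  proof (rule ccontr)
    assume "p \<noteq> 0"
    then have "finite {x. poly p x = 0}" by (rule poly_roots_finite)
    moreover have "R \<subseteq> {x. poly p x = 0}"
      using assms(3) by (auto simp: p_def poly_sum poly_monom)
    ultimately show False using assms(2) finite_subset by blast
  qed
  then have "coeff p k = 0" by simp
  then show ?thesis using assms(1,4) by (simp add: p_def coeff_sum coeff_monom)
qed

lemma grouped_coeffs_eq_0_if_infinitely_many_roots:
  fixes c :: "'b \<Rightarrow> 'a::idom"
  assumes "finite F" "infinite R" "\<And>x. x \<in> R \<Longrightarrow> (\<Sum>y\<in>F. c y * x ^ h y) = 0"
  shows "(\<Sum>y\<in>{y\<in>F. h y = e}. c y) = 0"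
proof (cases "e \<in> h ` F")
  case True
  have regroup: "(\<Sum>e\<in>h ` F. (\<Sum>y\<in>{y\<in>F. h y = e}. c y) * x ^ e) = (\<Sum>y\<in>F. c y * x ^ h y)" for x
  proof -
    have "(\<Sum>e\<in>h ` F. (\<Sum>y\<in>{y\<in>F. h y = e}. c y) * x ^ e) =
        (\<Sum>e\<in>h ` F. \<Sum>y\<in>{y\<in>F. h y = e}. c y * x ^ h y)"
      by (simp add: sum_distrib_right)
    also have "\<dots> = (\<Sum>y\<in>F. c y * x ^ h y)"
      by (rule sum.image_gen[OF assms(1), symmetric])
    finally show ?thesis .
  qed
  show ?thesis
    by (rule coeffs_eq_0_if_infinitely_many_roots[OF _ assms(2) _ True]) (simp_all add: assms(1,3) regroup)
next
  case False
  then have "{y\<in>F. h y = e} = {}" by blast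
  then show ?thesis by (simp only: sum.empty)
qed

text \<open>Writing \<open>w = \<rho> u\<close> with \<open>\<rho> > 0\<close>, \<open>\<bar>u\<bar> = 1\<close> turns \<open>w\<^sup>a \<bar>w\<^sup>b\<close> into
  \<open>\<rho>\<^sup>a\<^sup>+\<^sup>b u\<^sup>a\<^sup>-\<^sup>b\<close>; the two exponents determine \<open>(a, b)\<close>.\<close>

lemma power_cnj_power_polar:
  fixes u c :: complex and \<rho> :: real
  assumes "cmod u = 1" and "b \<le> D"
  shows "c * of_real \<rho> ^ (a + b) * u ^ (a + D - b) =
    u ^ D * (c * (of_real \<rho> * u) ^ a * cnj (of_real \<rho> * u) ^ b)"
proof -
  have "u \<noteq> 0" using assms(1) by auto
  have "u * cnj u = 1"
    using assms(1) by (simp add: complex_mult_cnj cmod_def)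
  then have "cnj (of_real \<rho> * u) = of_real \<rho> * inverse u"
    using \<open>u \<noteq> 0\<close> by (simp add: field_simps)
  moreover have "u ^ (a + D - b) = u ^ a * (u ^ D * inverse u ^ b)"
    using assms(2) \<open>u \<noteq> 0\<close> by (simp add: power_add power_diff power_inverse divide_inverse)
  ultimately show ?thesis by (simp only: power_mult_distrib power_add mult_ac)
qed

lemma power_cnj_power_independent:
  fixes g :: "nat \<times> nat \<Rightarrow> complex"
  assumes fin: "finite F" and zero: "\<And>w. (\<Sum>x\<in>F. g x * w ^ fst x * cnj w ^ snd x) = 0"
    and "x0 \<in> F"
  shows "g x0 = 0"
proof -
  define D where "D = (\<Sum>x\<in>F. snd x)"
  have snd_le: "snd x \<le> D" if "x \<in> F" for x
    unfolding D_def using member_le_sum[of x F snd] fin that by auto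
  define h where "h x = fst x + D - snd x" for x :: "nat \<times> nat"
  define s where "s x = fst x + snd x" for x :: "nat \<times> nat"
  let ?F = "{y\<in>F. h y = h x0}"
  have angular: "(\<Sum>y\<in>?F. g y * of_real \<rho> ^ s y) = 0" for \<rho> :: real
  proof (rule grouped_coeffs_eq_0_if_infinitely_many_roots[OF fin infinite_unit_circle])
    fix u :: complex assume "u \<in> {u. cmod u = 1}"
    then have "(\<Sum>y\<in>F. (g y * of_real \<rho> ^ s y) * u ^ h y) =
        (\<Sum>y\<in>F. u ^ D * (g y * (of_real \<rho> * u) ^ fst y * cnj (of_real \<rho> * u) ^ snd y))"
      unfolding h_def s_def by (intro sum.cong refl power_cnj_power_polar snd_le) auto
    also have "\<dots> = u ^ D * (\<Sum>y\<in>F. g y * (of_real \<rho> * u) ^ fst y * cnj (of_real \<rho> * u) ^ snd y)"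
      by (simp add: sum_distrib_left)
    also have "\<dots> = 0"
      by (simp only: zero mult_zero_right)
    finally show "(\<Sum>y\<in>F. (g y * of_real \<rho> ^ s y) * u ^ h y) = 0" .
  qed
  have "inj (of_real :: real \<Rightarrow> complex)"
    by (simp add: inj_on_def)
  then have reals: "infinite (range (of_real :: real \<Rightarrow> complex))"
    using infinite_UNIV_char_0 finite_imageD by blast
  have "(\<Sum>y\<in>{y\<in>?F. s y = s x0}. g y) = 0"
    by (rule grouped_coeffs_eq_0_if_infinitely_many_roots[where F = ?F and c = g and h = s, OF _ reals])
      (use fin angular in auto)
  moreover have "y = x0" if "y \<in> F" "h y = h x0" "s y = s x0" for y
  proof -
    have "snd y \<le> D" "snd x0 \<le> D" using snd_le that(1) \<open>x0 \<in> F\<close> by auto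
    with that(2,3) have "fst y = fst x0 \<and> snd y = snd x0"
      unfolding h_def s_def by linarith
    then show ?thesis by (simp add: prod_eq_iff)
  qed
  then have "{y\<in>?F. s y = s x0} = {x0}"
    using \<open>x0 \<in> F\<close> by blast
  ultimately show ?thesis by simp
qed

lemma base_expansion_unique:
  fixes B :: nat
  assumes "\<forall>j<N. d j < B" "\<forall>j<N. e j < B" "(\<Sum>j<N. d j * B ^ j) = (\<Sum>j<N. e j * B ^ j)"
  shows "\<forall>j<N. d j = e j"
  using assms
proof (induction N arbitrary: d e)
  case 0
  then show ?case by simp
next
  case (Suc N)
  have shift: "(\<Sum>j<Suc N. d j * B ^ j) = d 0 + B * (\<Sum>j<N. d (Suc j) * B ^ j)" for d :: "nat \<Rightarrow> nat"
    by (simp add: sum.lessThan_Suc_shift sum_distrib_left mult_ac del: sum.lessThan_Suc)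
  have digits: "d 0 < B" "e 0 < B" using Suc.prems(1,2) by auto
  have eq: "d 0 + B * (\<Sum>j<N. d (Suc j) * B ^ j) = e 0 + B * (\<Sum>j<N. e (Suc j) * B ^ j)"
    using Suc.prems(3) shift[of d] shift[of e] by simp
  have "(d 0 + B * (\<Sum>j<N. d (Suc j) * B ^ j)) mod B = d 0" using digits by simp
  moreover have "(e 0 + B * (\<Sum>j<N. e (Suc j) * B ^ j)) mod B = e 0" using digits by simp
  ultimately have head: "d 0 = e 0" using eq by simp
  have "(d 0 + B * (\<Sum>j<N. d (Suc j) * B ^ j)) div B = (\<Sum>j<N. d (Suc j) * B ^ j)" using digits by simp
  moreover have "(e 0 + B * (\<Sum>j<N. e (Suc j) * B ^ j)) div B = (\<Sum>j<N. e (Suc j) * B ^ j)" using digits by simp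
  ultimately have tail: "(\<Sum>j<N. d (Suc j) * B ^ j) = (\<Sum>j<N. e (Suc j) * B ^ j)" using eq by simp
  have "\<forall>j<N. d (Suc j) < B" "\<forall>j<N. e (Suc j) < B" using Suc.prems(1,2) by auto
  from Suc.IH[OF this tail] head show ?case by (metis less_Suc_eq_0_disj)
qed

definition vars :: "nat \<Rightarrow> (nat + nat) set" where
  "vars n = Inl ` {..<n} \<union> Inr ` {..<n}"

lemma finite_vars [simp]: "finite (vars n)"
  by (simp add: vars_def)

lemma vars_iff: "x \<in> vars n \<longleftrightarrow> var_idx x < n"
  by (cases x) (auto simp: vars_def var_idx_def)

text \<open>Kronecker substitution: on \<open>z\<^sub>j = w\<^bsup>B\<^sup>j\<^esup>\<close> a monomial becomes \<open>w\<^sup>P \<bar>w\<^sup>Q\<close>, where \<open>(P, Q)\<close> are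
  its exponents read as base-\<open>B\<close> numbers; they determine the monomial once all exponents are \<open>< B\<close>.\<close>

definition kronecker_exps :: "nat \<Rightarrow> nat \<Rightarrow> ((nat + nat) \<Rightarrow>\<^sub>0 nat) \<Rightarrow> nat \<times> nat" where
  "kronecker_exps N B m = ((\<Sum>j<N. Poly_Mapping.lookup m (Inl j) * B ^ j),
                           (\<Sum>j<N. Poly_Mapping.lookup m (Inr j) * B ^ j))"

lemma mon_eval_Kronecker:
  assumes "Poly_Mapping.keys m \<subseteq> vars N"
  shows "mon_eval m (\<lambda>j. w ^ (B ^ j)) = w ^ fst (kronecker_exps N B m) * cnj w ^ snd (kronecker_exps N B m)"
proof -
  let ?z = "\<lambda>j. w ^ (B ^ j)"
  have "mon_eval m ?z = (\<Prod>x\<in>Inl ` {..<N} \<union> Inr ` {..<N}. var_val ?z x ^ Poly_Mapping.lookup m x)"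
    using assms unfolding vars_def by (rule mon_eval_superset[rotated]) simp
  also have "\<dots> = (\<Prod>x\<in>Inl ` {..<N}. var_val ?z x ^ Poly_Mapping.lookup m x) *
                  (\<Prod>x\<in>Inr ` {..<N}. var_val ?z x ^ Poly_Mapping.lookup m x)"
    by (rule prod.union_disjoint) auto
  also have "\<dots> = (\<Prod>j<N. w ^ (Poly_Mapping.lookup m (Inl j) * B ^ j)) *
                  (\<Prod>j<N. cnj w ^ (Poly_Mapping.lookup m (Inr j) * B ^ j))"
    by (simp add: prod.reindex var_val_def power_mult[symmetric] mult.commute)
  finally show ?thesis by (simp add: power_sum kronecker_exps_def)
qed

lemma inj_on_kronecker_exps:
  assumes less: "\<And>m x. m \<in> K \<Longrightarrow> Poly_Mapping.lookup m x < B"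
    and keys: "\<And>m. m \<in> K \<Longrightarrow> Poly_Mapping.keys m \<subseteq> vars N"
  shows "inj_on (kronecker_exps N B) K"
proof (rule inj_onI)
  fix m m' assume mm': "m \<in> K" "m' \<in> K" "kronecker_exps N B m = kronecker_exps N B m'"
  then have "(\<Sum>j<N. Poly_Mapping.lookup m (Inl j) * B ^ j) = (\<Sum>j<N. Poly_Mapping.lookup m' (Inl j) * B ^ j)"
    and "(\<Sum>j<N. Poly_Mapping.lookup m (Inr j) * B ^ j) = (\<Sum>j<N. Poly_Mapping.lookup m' (Inr j) * B ^ j)"
    by (simp_all add: kronecker_exps_def)
  then have "\<forall>j<N. Poly_Mapping.lookup m (Inl j) = Poly_Mapping.lookup m' (Inl j)"
    and "\<forall>j<N. Poly_Mapping.lookup m (Inr j) = Poly_Mapping.lookup m' (Inr j)"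
    using mm'(1,2) less by (intro base_expansion_unique; simp)+
  then have "Poly_Mapping.lookup m x = Poly_Mapping.lookup m' x" if "x \<in> vars N" for x
    using that by (auto simp: vars_def)
  moreover have "Poly_Mapping.lookup m x = Poly_Mapping.lookup m' x" if "x \<notin> vars N" for x
  proof -
    have "x \<notin> Poly_Mapping.keys m" "x \<notin> Poly_Mapping.keys m'"
      using that keys mm'(1,2) by blast+
    then show ?thesis by (simp add: in_keys_iff)
  qed
  ultimately show "m = m'" by (metis poly_mapping_eqI)
qed

lemma mon_eval_independent:
  assumes fin: "finite K" and zero: "\<And>z. (\<Sum>m\<in>K. d m * mon_eval m z) = 0" and "m0 \<in> K"
  shows "d m0 = 0"
proof -
  define B where "B = Suc (\<Sum>m\<in>K. \<Sum>x\<in>Poly_Mapping.keys m. Poly_Mapping.lookup m x)"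
  define N where "N = Suc (\<Sum>m\<in>K. \<Sum>x\<in>Poly_Mapping.keys m. var_idx x)"
  have lookup_less: "Poly_Mapping.lookup m x < B" if "m \<in> K" for m x
  proof (cases "x \<in> Poly_Mapping.keys m")
    case True
    have "Poly_Mapping.lookup m x \<le> (\<Sum>x\<in>Poly_Mapping.keys m. Poly_Mapping.lookup m x)"
      using True by (intro member_le_sum) auto
    also have "\<dots> \<le> (\<Sum>m\<in>K. \<Sum>x\<in>Poly_Mapping.keys m. Poly_Mapping.lookup m x)"
      using that fin by (intro member_le_sum) auto
    finally show ?thesis unfolding B_def by simp
  qed (simp add: B_def in_keys_iff)
  have keys_vars: "Poly_Mapping.keys m \<subseteq> vars N" if "m \<in> K" for m
  proof
    fix x assume x: "x \<in> Poly_Mapping.keys m"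
    have "var_idx x \<le> (\<Sum>x\<in>Poly_Mapping.keys m. var_idx x)"
      using x by (intro member_le_sum) auto
    also have "\<dots> \<le> (\<Sum>m\<in>K. \<Sum>x\<in>Poly_Mapping.keys m. var_idx x)"
      using that fin by (intro member_le_sum) auto
    finally show "x \<in> vars N" unfolding N_def vars_iff by simp
  qed
  let ?PQ = "kronecker_exps N B"
  have inj: "inj_on ?PQ K"
    using lookup_less keys_vars by (rule inj_on_kronecker_exps)
  define g where "g = d \<circ> the_inv_into K ?PQ"
  have "(\<Sum>x\<in>?PQ ` K. g x * w ^ fst x * cnj w ^ snd x) = 0" for w
  proof -
    have "(\<Sum>x\<in>?PQ ` K. g x * w ^ fst x * cnj w ^ snd x) = (\<Sum>m\<in>K. d m * mon_eval m (\<lambda>j. w ^ (B ^ j)))"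
      unfolding sum.reindex[OF inj] comp_def
      by (rule sum.cong[OF refl]) (simp add: g_def the_inv_into_f_f[OF inj] mon_eval_Kronecker[OF keys_vars] mult.assoc)
    then show ?thesis by (simp add: zero)
  qed
  from power_cnj_power_independent[OF finite_imageI[OF fin] this imageI[OF \<open>m0 \<in> K\<close>]]
  show ?thesis by (simp add: g_def the_inv_into_f_f[OF inj \<open>m0 \<in> K\<close>])
qed

section \<open>Invariance under the torus and weights of monomials\<close>

definition var_char :: "(nat \<Rightarrow> nat \<Rightarrow> int) \<Rightarrow> nat \<Rightarrow> (nat \<Rightarrow> complex) \<Rightarrow> nat + nat \<Rightarrow> complex" where
  "var_char A l t x = (case x of Inl j \<Rightarrow> tchar A l t j | Inr j \<Rightarrow> cnj (tchar A l t j))"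

definition mon_char :: "(nat \<Rightarrow> nat \<Rightarrow> int) \<Rightarrow> nat \<Rightarrow> (nat \<Rightarrow> complex) \<Rightarrow> ((nat + nat) \<Rightarrow>\<^sub>0 nat) \<Rightarrow> complex" where
  "mon_char A l t m = (\<Prod>x\<in>Poly_Mapping.keys m. var_char A l t x ^ Poly_Mapping.lookup m x)"

definition weight :: "(nat \<Rightarrow> nat \<Rightarrow> int) \<Rightarrow> nat \<Rightarrow> ((nat + nat) \<Rightarrow>\<^sub>0 nat) \<Rightarrow> nat \<Rightarrow> int" where
  "weight A n m i =
     (\<Sum>j<n. A i j * (int (Poly_Mapping.lookup m (Inl j)) - int (Poly_Mapping.lookup m (Inr j))))"

lemma mon_eval_act: "mon_eval m (act A l t z) = mon_char A l t m * mon_eval m z"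
proof -
  have "var_val (act A l t z) x = var_char A l t x * var_val z x" for x
    by (cases x) (auto simp: var_val_def var_char_def act_def)
  then show ?thesis
    by (simp add: mon_eval_def mon_char_def power_mult_distrib prod.distrib)
qed

lemma power_int_sum:
  fixes x :: "'a::field"
  assumes "x \<noteq> 0"
  shows "x powi (\<Sum>a\<in>S. f a) = (\<Prod>a\<in>S. x powi f a)"
  by (induction S rule: infinite_finite_induct) (auto simp: power_int_add assms)

lemma mon_char_torus:
  assumes t: "in_torus l t" and keys: "Poly_Mapping.keys m \<subseteq> vars n"
  shows "mon_char A l t m = (\<Prod>i<l. t i powi weight A n m i)"
proof -
  have t0: "t i \<noteq> 0" if "i < l" for i
    using t that by (auto simp: in_torus_def)
  have cnj_t: "cnj (t i) = inverse (t i)" if "i < l" for i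
  proof -
    have "t i * cnj (t i) = 1" using t that by (simp add: complex_mult_cnj cmod_def in_torus_def)
    then show ?thesis using t0[OF that] by (simp add: field_simps)
  qed
  define c where "c x i = int (Poly_Mapping.lookup m x) * (case x of Inl j \<Rightarrow> A i j | Inr j \<Rightarrow> - A i j)" for x i
  have var_char_power: "var_char A l t x ^ Poly_Mapping.lookup m x = (\<Prod>i<l. t i powi c x i)" for x
  proof (cases x)
    case (Inl j)
    then show ?thesis
      by (simp add: var_char_def tchar_def prod_power_distrib c_def power_int_power' mult.commute)
  next
    case (Inr j)
    have "var_char A l t x ^ Poly_Mapping.lookup m x = (\<Prod>i<l. (t i powi (- A i j)) ^ Poly_Mapping.lookup m x)"
      by (simp add: Inr var_char_def tchar_def prod_power_distrib cnj_t power_int_inverse power_int_minus)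
    then show ?thesis
      by (simp add: Inr c_def power_int_power' mult.commute)
  qed
  have "mon_char A l t m = (\<Prod>x\<in>vars n. var_char A l t x ^ Poly_Mapping.lookup m x)"
    unfolding mon_char_def by (rule prod.mono_neutral_left[OF finite_vars keys]) (auto simp: in_keys_iff)
  also have "\<dots> = (\<Prod>i<l. \<Prod>x\<in>vars n. t i powi c x i)"
    by (simp add: var_char_power prod.swap[of _ "vars n"])
  also have "\<dots> = (\<Prod>i<l. t i powi (\<Sum>x\<in>vars n. c x i))"
    by (simp add: power_int_sum t0)
  also have "\<dots> = (\<Prod>i<l. t i powi weight A n m i)"
  proof (rule prod.cong[OF refl])
    fix i
    have "(\<Sum>x\<in>vars n. c x i) = (\<Sum>x\<in>Inl ` {..<n}. c x i) + (\<Sum>x\<in>Inr ` {..<n}. c x i)"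
      unfolding vars_def by (rule sum.union_disjoint) auto
    also have "\<dots> = weight A n m i"
      by (simp add: sum.reindex c_def weight_def algebra_simps sum_subtractf sum_negf)
    finally show "t i powi (\<Sum>x\<in>vars n. c x i) = t i powi weight A n m i" by simp
  qed
  finally show ?thesis .
qed

lemma power_int_eq_1_on_circle_imp_0:
  assumes "\<And>u::complex. cmod u = 1 \<Longrightarrow> u powi w = 1"
  shows "w = 0"
proof (rule ccontr)
  assume "w \<noteq> 0"
  then have "cis (pi / of_int w) powi w = -1"
    by (simp add: cis_power_int)
  moreover have "cis (pi / of_int w) powi w = 1"
    by (rule assms) simp
  ultimately show False by simp
qed

lemma weight_eq_0_if_mon_char_eq_1:
  assumes "i < l" and keys: "Poly_Mapping.keys m \<subseteq> vars n"
    and char: "\<And>t. in_torus l t \<Longrightarrow> mon_char A l t m = 1"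
  shows "weight A n m i = 0"
proof (rule power_int_eq_1_on_circle_imp_0)
  fix u :: complex assume u: "cmod u = 1"
  define t where "t = (\<lambda>i'. if i' = i then u else 1)"
  have t: "in_torus l t" using u by (simp add: in_torus_def t_def)
  have "mon_char A l t m = (\<Prod>i'<l. t i' powi weight A n m i')"
    by (rule mon_char_torus[OF t keys])
  also have "\<dots> = (\<Prod>i'\<in>{i}. t i' powi weight A n m i')"
    by (rule prod.mono_neutral_right) (auto simp: t_def \<open>i < l\<close>)
  finally show "u powi weight A n m i = 1"
    using char[OF t] by (simp add: t_def)
qed

lemma mon_char_eq_1_if_invariant:
  assumes f: "f \<in> inv_polys A l n" and m: "m \<in> Poly_Mapping.keys f" and t: "in_torus l t"
  shows "mon_char A l t m = 1"
proof -
  let ?K = "Poly_Mapping.keys f"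
  have "(\<Sum>m\<in>?K. (Poly_Mapping.lookup f m * (mon_char A l t m - 1)) * mon_eval m z) = 0" for z
  proof -
    have "peval f (act A l t z) = peval f z" using f t by (auto simp: inv_polys_def)
    then show ?thesis
      by (simp add: peval_eq_sum mon_eval_act algebra_simps sum_subtractf)
  qed
  from mon_eval_independent[OF finite_keys this m]
  show ?thesis using m by (simp add: in_keys_iff)
qed

definition invariant_mon :: "(nat \<Rightarrow> nat \<Rightarrow> int) \<Rightarrow> nat \<Rightarrow> nat \<Rightarrow> ((nat + nat) \<Rightarrow>\<^sub>0 nat) \<Rightarrow> bool" where
  "invariant_mon A l n m \<longleftrightarrow> Poly_Mapping.keys m \<subseteq> vars n \<and> (\<forall>i<l. weight A n m i = 0)"

lemma in_vars_iff: "in_vars n f \<longleftrightarrow> (\<forall>m\<in>Poly_Mapping.keys f. Poly_Mapping.keys m \<subseteq> vars n)"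
  unfolding in_vars_def subset_iff vars_iff by blast

lemma inv_polys_iff: "f \<in> inv_polys A l n \<longleftrightarrow> (\<forall>m\<in>Poly_Mapping.keys f. invariant_mon A l n m)"
proof
  assume f: "f \<in> inv_polys A l n"
  then have "in_vars n f" by (simp add: inv_polys_def)
  moreover have "weight A n m i = 0" if "m \<in> Poly_Mapping.keys f" "i < l" for m i
    using \<open>i < l\<close> \<open>in_vars n f\<close> that(1) mon_char_eq_1_if_invariant[OF f that(1)]
    by (intro weight_eq_0_if_mon_char_eq_1) (auto simp: in_vars_iff)
  ultimately show "\<forall>m\<in>Poly_Mapping.keys f. invariant_mon A l n m"
    by (simp add: invariant_mon_def in_vars_iff)
next
  assume f: "\<forall>m\<in>Poly_Mapping.keys f. invariant_mon A l n m"
  have "mon_char A l t m = 1" if "in_torus l t" "m \<in> Poly_Mapping.keys f" for t m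
  proof -
    have "mon_char A l t m = (\<Prod>i<l. t i powi weight A n m i)"
      using f that by (intro mon_char_torus) (auto simp: invariant_mon_def)
    also have "\<dots> = 1" using f that(2) by (intro prod.neutral) (simp add: invariant_mon_def)
    finally show ?thesis .
  qed
  then have "peval f (act A l t z) = peval f z" if "in_torus l t" for t z
    using that by (simp add: peval_eq_sum mon_eval_act)
  then show "f \<in> inv_polys A l n"
    using f by (simp add: inv_polys_def in_vars_iff invariant_mon_def)
qed

lemma single_in_inv_polys: "invariant_mon A l n m \<Longrightarrow> Poly_Mapping.single m c \<in> inv_polys A l n"
  by (simp add: inv_polys_iff)

lemma Const_in_inv_polys: "Const c \<in> inv_polys A l n"
  by (simp add: Const_def single_in_inv_polys invariant_mon_def weight_def)

lemma add_in_inv_polys: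
  assumes "f \<in> inv_polys A l n" "g \<in> inv_polys A l n"
  shows "f + g \<in> inv_polys A l n"
  using assms keys_add[of f g] by (auto simp: inv_polys_iff)

lemma mult_in_inv_polys:
  assumes "f \<in> inv_polys A l n" "g \<in> inv_polys A l n"
  shows "f * g \<in> inv_polys A l n"
proof -
  have "Poly_Mapping.keys m \<subseteq> vars n" if m: "m \<in> Poly_Mapping.keys (f * g)" for m
  proof -
    obtain p q where "m = p + q" "p \<in> Poly_Mapping.keys f" "q \<in> Poly_Mapping.keys g"
      using keys_mult[of f g] m by blast
    moreover have "Poly_Mapping.keys p \<subseteq> vars n" "Poly_Mapping.keys q \<subseteq> vars n"
      using assms calculation(2,3) by (auto simp: inv_polys_def in_vars_iff)
    ultimately show ?thesis
      using keys_add[of p q] by blast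
  qed
  with assms show ?thesis by (simp add: inv_polys_def in_vars_iff peval_mult)
qed

section \<open>Generated subalgebras\<close>

lemma gen_alg_subset:
  assumes "G \<subseteq> S" "\<And>c. Const c \<in> S" "\<And>f g. f \<in> S \<Longrightarrow> g \<in> S \<Longrightarrow> f + g \<in> S"
    "\<And>f g. f \<in> S \<Longrightarrow> g \<in> S \<Longrightarrow> f * g \<in> S"
  shows "gen_alg G \<subseteq> S"
proof
  fix f assume "f \<in> gen_alg G"
  then show "f \<in> S" by (induction rule: gen_alg.induct) (use assms in auto)
qed

lemma gen_alg_sum: "(\<And>i. i \<in> I \<Longrightarrow> f i \<in> gen_alg G) \<Longrightarrow> (\<Sum>i\<in>I. f i) \<in> gen_alg G"
  by (induction I rule: infinite_finite_induct)
    (auto intro: gen_alg.add gen_alg.const[of 0, unfolded Const_def single_zero])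

lemma in_gen_alg_if_monomials:
  assumes "\<And>m. m \<in> Poly_Mapping.keys f \<Longrightarrow> Poly_Mapping.single m 1 \<in> gen_alg G"
  shows "f \<in> gen_alg G"
proof -
  have "Poly_Mapping.single m (Poly_Mapping.lookup f m) \<in> gen_alg G" if "m \<in> Poly_Mapping.keys f" for m
    using gen_alg.mult[OF gen_alg.const assms[OF that]] by (simp add: Const_def mult_single)
  then have "(\<Sum>m\<in>Poly_Mapping.keys f. Poly_Mapping.single m (Poly_Mapping.lookup f m)) \<in> gen_alg G"
    by (rule gen_alg_sum)
  then show ?thesis by (simp add: sum_single_lookup)
qed

lemma gen_alg_agree_on:
  assumes "\<And>g. g \<in> G \<Longrightarrow> \<exists>h\<in>gen_alg H. \<forall>z\<in>Z. peval g z = peval h z"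
  shows "f \<in> gen_alg G \<Longrightarrow> \<exists>h\<in>gen_alg H. \<forall>z\<in>Z. peval f z = peval h z"
proof (induction rule: gen_alg.induct)
  case (const c)
  show ?case using gen_alg.const by fastforce
next
  case (gen g)
  then show ?case by (rule assms)
next
  case (add f g)
  then obtain f' g' where "f' \<in> gen_alg H" "g' \<in> gen_alg H"
    "\<forall>z\<in>Z. peval f z = peval f' z" "\<forall>z\<in>Z. peval g z = peval g' z" by blast
  then show ?case by (intro bexI[of _ "f' + g'"] gen_alg.add) (auto simp: peval_add)
next
  case (mult f g)
  then obtain f' g' where "f' \<in> gen_alg H" "g' \<in> gen_alg H"
    "\<forall>z\<in>Z. peval f z = peval f' z" "\<forall>z\<in>Z. peval g z = peval g' z" by blast
  then show ?case by (intro bexI[of _ "f' * g'"] gen_alg.mult) (auto simp: peval_mult)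
qed

definition mon_degree :: "('a \<Rightarrow>\<^sub>0 nat) \<Rightarrow> nat" where
  "mon_degree m = (\<Sum>x\<in>Poly_Mapping.keys m. Poly_Mapping.lookup m x)"

lemma mon_degree_add: "mon_degree (m + m') = mon_degree m + mon_degree m'"
  unfolding mon_degree_def by (rule setsum_keys_plus_distrib) simp_all

lemma mon_degree_pos:
  assumes "m \<noteq> 0"
  shows "0 < mon_degree m"
proof -
  obtain x where "x \<in> Poly_Mapping.keys m" using assms keys_eq_empty by blast
  then have "0 < Poly_Mapping.lookup m x" "Poly_Mapping.lookup m x \<le> mon_degree m"
    unfolding mon_degree_def by (auto simp: in_keys_iff intro: member_le_sum)
  then show ?thesis by linarith
qed

lemma single_in_gen_alg_by_divisors:
  assumes divisor: "\<And>m. P m \<Longrightarrow> m \<noteq> 0 \<Longrightarrow> \<exists>g. g \<noteq> 0 \<and> Poly_Mapping.lookup g \<le> Poly_Mapping.lookup m \<and>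
      P (m - g) \<and> Poly_Mapping.single g 1 \<in> gen_alg G"
  shows "P m \<Longrightarrow> Poly_Mapping.single m 1 \<in> gen_alg G"
proof (induction "mon_degree m" arbitrary: m rule: less_induct)
  case less
  show ?case
  proof (cases "m = 0")
    case True
    then show ?thesis using gen_alg.const[of 1 G] by (simp add: Const_def)
  next
    case False
    then obtain g where g: "g \<noteq> 0" "Poly_Mapping.lookup g \<le> Poly_Mapping.lookup m" "P (m - g)"
      "Poly_Mapping.single g 1 \<in> gen_alg G"
      using divisor less.prems by blast
    have m: "m = g + (m - g)"
      using g(2) by (intro poly_mapping_eqI) (simp add: lookup_add lookup_minus le_fun_def)
    then have "mon_degree m = mon_degree g + mon_degree (m - g)"
      by (metis mon_degree_add)
    then have "mon_degree (m - g) < mon_degree m"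
      using mon_degree_pos[OF g(1)] by linarith
    then have "Poly_Mapping.single (m - g) 1 \<in> gen_alg G"
      using less.hyps g(3) by blast
    from gen_alg.mult[OF g(4) this] show ?thesis
      by (subst m) (simp add: mult_single)
  qed
qed

section \<open>Weights for Type I matrices\<close>

lemma sum_lessThan_add:
  fixes f :: "nat \<Rightarrow> 'a::comm_monoid_add"
  shows "(\<Sum>j<l + k. f j) = (\<Sum>j<l. f j) + (\<Sum>j<k. f (l + j))"
  by (induction k) (auto simp: add.assoc)

text \<open>\<open>side True\<close> indexes the \<open>z\<^sub>j\<close> and \<open>side False\<close> the \<open>\<bar>z\<^sub>j\<close>; this makes the
  arguments for \<open>q\<^sub>s\<close> and \<open>\<bar>q\<^sub>s\<close> one and the same.\<close>

definition side :: "bool \<Rightarrow> nat \<Rightarrow> nat + nat" where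
  "side b = (if b then Inl else Inr)"

definition dexp :: "bool \<Rightarrow> ((nat + nat) \<Rightarrow>\<^sub>0 nat) \<Rightarrow> nat \<Rightarrow> int" where
  "dexp b m j = int (Poly_Mapping.lookup m (side b j)) - int (Poly_Mapping.lookup m (side (\<not> b) j))"

lemma dexp_False: "dexp False m j = - dexp True m j"
  by (simp add: dexp_def side_def)

lemma weight_typeI:
  assumes "i < l"
  shows "weight (typeI a nv l) (l + k) m i = - int (a i) * dexp True m i + int (nv i) * (\<Sum>j<k. dexp True m (l + j))"
proof -
  have "weight (typeI a nv l) (l + k) m i =
      (\<Sum>j<l. typeI a nv l i j * dexp True m j) + (\<Sum>j<k. typeI a nv l i (l + j) * dexp True m (l + j))"
    unfolding weight_def dexp_def side_def by (simp add: sum_lessThan_add)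
  also have "(\<Sum>j<l. typeI a nv l i j * dexp True m j) = (\<Sum>j<l. if j = i then - int (a i) * dexp True m j else 0)"
    by (rule sum.cong) (auto simp: typeI_def)
  also have "(\<Sum>j<k. typeI a nv l i (l + j) * dexp True m (l + j)) = int (nv i) * (\<Sum>j<k. dexp True m (l + j))"
    by (simp add: typeI_def sum_distrib_left)
  finally show ?thesis
    using assms by simp
qed

lemma weight_typeI_eq_0_iff:
  assumes "i < l"
  shows "weight (typeI a nv l) (l + k) m i = 0 \<longleftrightarrow>
    int (a i) * dexp b m i = int (nv i) * (\<Sum>j<k. dexp b m (l + j))"
  using weight_typeI[OF assms] by (cases b) (auto simp: dexp_False sum_negf)

lemma weight_add: "weight A n (m + m') i = weight A n m i + weight A n m' i"
  unfolding weight_def lookup_add sum.distrib[symmetric] by (rule sum.cong) (auto simp: algebra_simps)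

lemma invariant_mon_diff:
  assumes "invariant_mon A l n m" "invariant_mon A l n g" "Poly_Mapping.lookup g \<le> Poly_Mapping.lookup m"
  shows "invariant_mon A l n (m - g)"
proof -
  have "g + (m - g) = m"
    using assms(3) by (intro poly_mapping_eqI) (simp add: lookup_add lookup_minus le_fun_def)
  then have "weight A n m i = weight A n g i + weight A n (m - g) i" for i
    using weight_add[of A n g "m - g" i] by simp
  moreover have "Poly_Mapping.keys (m - g) \<subseteq> Poly_Mapping.keys m"
    by (auto simp: in_keys_iff lookup_minus)
  ultimately show ?thesis using assms(1,2) by (auto simp: invariant_mon_def)
qed

definition pair_exp :: "nat + nat \<Rightarrow> nat + nat \<Rightarrow> (nat + nat) \<Rightarrow>\<^sub>0 nat" where
  "pair_exp x y = Poly_Mapping.single x 1 + Poly_Mapping.single y 1"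

lemma Var_mult_Var: "Var x * Var y = Poly_Mapping.single (pair_exp x y) 1"
  by (simp add: Var_def pair_exp_def mult_single)

lemma lookup_pair_exp: "Poly_Mapping.lookup (pair_exp x y) v = (if v = x then 1 else 0) + (if v = y then 1 else 0)"
  by (simp add: pair_exp_def lookup_add lookup_single when_def)

lemma pair_exp_nonzero: "pair_exp x y \<noteq> 0"
proof
  assume "pair_exp x y = 0"
  then have "Poly_Mapping.lookup (pair_exp x y) x = 0" by simp
  then show False by (simp add: lookup_pair_exp)
qed

lemma invariant_mon_pair_exp:
  assumes "j < n" "j' < n" "\<forall>i<l. A i j = A i j'"
  shows "invariant_mon A l n (pair_exp (Inl j) (Inr j'))"
proof -
  have "Poly_Mapping.keys (pair_exp (Inl j) (Inr j')) \<subseteq> vars n"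
    using assms(1,2) by (auto simp: in_keys_iff lookup_pair_exp vars_def split: if_splits)
  moreover have "weight A n (pair_exp (Inl j) (Inr j')) i = A i j - A i j'" for i
  proof -
    have "weight A n (pair_exp (Inl j) (Inr j')) i =
        (\<Sum>j''<n. (if j'' = j then A i j'' else 0) - (if j'' = j' then A i j'' else 0))"
      unfolding weight_def by (intro sum.cong) (auto simp: lookup_pair_exp)
    also have "\<dots> = A i j - A i j'"
      using assms(1,2) by (simp add: sum_subtractf)
    finally show ?thesis .
  qed
  ultimately show ?thesis using assms(3) by (simp add: invariant_mon_def)
qed

lemma cis_2pi_div_ne_1:
  assumes "2 \<le> d"
  shows "cis (2 * pi / real d) \<noteq> 1"
proof
  assume "cis (2 * pi / real d) = 1"
  then have "cos (2 * pi / real d) = 1" by (metis cis.sel(1) one_complex.sel(1))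
  then obtain n :: int where "2 * pi / real d = n * 2 * pi" by (auto simp: cos_one_2pi_int)
  then have "real_of_int (n * int d) = 1" using assms by (simp add: field_simps)
  then have "n * int d = 1" by (simp only: of_int_eq_1_iff)
  then have "int d dvd 1" by (metis dvd_triv_right)
  then show False using assms by simp
qed

lemma faithful_typeI_coprime:
  assumes faithful: "faithful (typeI a nv l) l n" and "i < l" "a i > 0"
  shows "coprime (a i) (nv i)"
proof (rule ccontr)
  assume "\<not> coprime (a i) (nv i)"
  define d where "d = gcd (a i) (nv i)"
  have "d \<noteq> 1" "d > 0"
    using \<open>\<not> coprime (a i) (nv i)\<close> \<open>a i > 0\<close> by (simp_all add: d_def coprime_iff_gcd_eq_1)
  then have "2 \<le> d" by linarith
  define \<zeta> where "\<zeta> = cis (2 * pi / real d)"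
  have "\<zeta> ^ d = cis (real d * (2 * pi / real d))"
    unfolding \<zeta>_def by (rule Complex.DeMoivre)
  also have "\<dots> = 1"
    using \<open>2 \<le> d\<close> by simp
  finally have "\<zeta> ^ d = 1" .
  define t where "t = (\<lambda>i'. if i' = i then \<zeta> else 1)"
  have t: "in_torus l t" by (simp add: in_torus_def t_def \<zeta>_def)
  have "tchar (typeI a nv l) l t j = 1" for j
  proof -
    have "int d dvd typeI a nv l i j"
      by (auto simp: typeI_def d_def)
    then obtain q where q: "typeI a nv l i j = int d * q" by (elim dvdE)
    have "tchar (typeI a nv l) l t j = (\<Prod>i'<l. if i' = i then \<zeta> powi typeI a nv l i j else 1)"
      unfolding tchar_def by (rule prod.cong) (auto simp: t_def)
    also have "\<dots> = (\<zeta> ^ d) powi q"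
      using \<open>i < l\<close> by (simp add: q power_int_mult)
    finally show ?thesis by (simp add: \<open>\<zeta> ^ d = 1\<close>)
  qed
  then have "t i = 1" using faithful t \<open>i < l\<close> by (auto simp: faithful_def)
  then show False using cis_2pi_div_ne_1[OF \<open>2 \<le> d\<close>] by (simp add: t_def \<zeta>_def)
qed

lemma dvd_alphaA: "i < l \<Longrightarrow> a i dvd alphaA a l"
  unfolding alphaA_def by (rule dvd_Lcm) auto

lemma alphaA_pos:
  assumes "\<forall>i<l. a i > 0"
  shows "alphaA a l > 0"
proof -
  have "0 \<notin> a ` {..<l}" using assms by (auto simp: image_iff)
  then have "Lcm (a ` {..<l}) \<noteq> 0" by (simp add: Lcm_0_iff_nat)
  then show ?thesis unfolding alphaA_def using neq0_conv by blast
qed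

lemma alphaA_dvd_if_coprime:
  assumes "\<forall>i<l. coprime (a i) (nv i)" "\<And>i. i < l \<Longrightarrow> a i dvd nv i * N"
  shows "alphaA a l dvd N"
  unfolding alphaA_def using assms by (intro Lcm_least) (auto simp: coprime_dvd_mult_right_iff)

lemma mult_mA: "i < l \<Longrightarrow> a i * mA a nv l i = nv i * alphaA a l"
  unfolding mA_def using dvd_alphaA[of i l a] by (metis dvd_div_mult_self dvd_mult dvd_mult_div_cancel mult.commute)

definition qexp :: "bool \<Rightarrow> (nat \<Rightarrow> nat) \<Rightarrow> (nat \<Rightarrow> nat) \<Rightarrow> nat \<Rightarrow> nat \<Rightarrow> (nat \<Rightarrow> nat) \<Rightarrow> (nat + nat) \<Rightarrow>\<^sub>0 nat" where
  "qexp b a nv l k s = (\<Sum>i<l. Poly_Mapping.single (side b i) (mA a nv l i)) +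
                        (\<Sum>i<k. Poly_Mapping.single (side b (l + i)) (s i))"

lemma Var_power: "Var x ^ e = Poly_Mapping.single (Poly_Mapping.single x e) 1"
  by (induction e) (simp_all add: Var_def mult_single single_add[symmetric])

lemma prod_single: "(\<Prod>i\<in>I. Poly_Mapping.single (f i) (1::complex)) = Poly_Mapping.single (\<Sum>i\<in>I. f i) 1"
  by (induction I rule: infinite_finite_induct) (auto simp: mult_single)

lemma qmono_side: "qmono (side b) a nv l k s = Poly_Mapping.single (qexp b a nv l k s) 1"
  by (simp add: qmono_def qexp_def Var_power prod_single mult_single)

lemma lookup_qexp:
  shows "Poly_Mapping.lookup (qexp b a nv l k s) (side b j) =
           (if j < l then mA a nv l j else if j < l + k then s (j - l) else 0)"
    and "Poly_Mapping.lookup (qexp b a nv l k s) (side (\<not> b) j) = 0"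
proof -
  have "Poly_Mapping.lookup (qexp b a nv l k s) (side b j) =
      (\<Sum>i<l. if i = j then mA a nv l i else 0) + (\<Sum>i<k. if i = j - l \<and> l \<le> j then s i else 0)"
    by (cases b) (auto simp: qexp_def lookup_add lookup_sum lookup_single when_def side_def intro!: sum.cong)
  then show "Poly_Mapping.lookup (qexp b a nv l k s) (side b j) =
      (if j < l then mA a nv l j else if j < l + k then s (j - l) else 0)"
    by (cases "l \<le> j") auto
  show "Poly_Mapping.lookup (qexp b a nv l k s) (side (\<not> b) j) = 0"
    by (cases b) (simp_all add: qexp_def lookup_add lookup_sum lookup_single side_def)
qed

lemma side_cases: obtains "x = side b (var_idx x)" | "x = side (\<not> b) (var_idx x)"
  by (cases b; cases x) (auto simp: side_def var_idx_def)

lemma invariant_mon_qexp: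
  assumes "s \<in> svecs k (alphaA a l)"
  shows "invariant_mon (typeI a nv l) l (l + k) (qexp b a nv l k s)"
proof -
  let ?q = "qexp b a nv l k s"
  have dexp_q: "dexp b ?q j = int (if j < l then mA a nv l j else if j < l + k then s (j - l) else 0)" for j
    by (simp add: dexp_def lookup_qexp)
  have "Poly_Mapping.keys ?q \<subseteq> vars (l + k)"
  proof
    fix x assume x: "x \<in> Poly_Mapping.keys ?q"
    then have "Poly_Mapping.lookup ?q x \<noteq> 0" by (simp add: in_keys_iff)
    then show "x \<in> vars (l + k)"
    proof (cases x rule: side_cases[where b = b])
      case 1
      then show ?thesis
        using \<open>Poly_Mapping.lookup ?q x \<noteq> 0\<close> lookup_qexp(1)[of b a nv l k s "var_idx x", folded 1]
        by (auto simp: vars_iff split: if_splits)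
    next
      case 2
      then show ?thesis
        using \<open>Poly_Mapping.lookup ?q x \<noteq> 0\<close> lookup_qexp(2)[of b a nv l k s "var_idx x", folded 2] by simp
    qed
  qed
  moreover have "weight (typeI a nv l) (l + k) ?q i = 0" if "i < l" for i
  proof -
    have "(\<Sum>j<k. dexp b ?q (l + j)) = int (alphaA a l)"
      using assms by (simp add: dexp_q svecs_def flip: of_nat_sum)
    with mult_mA[OF that, of a nv] show ?thesis
      by (simp add: weight_typeI_eq_0_iff[OF that, of _ _ _ _ b] dexp_q that flip: of_nat_mult)
  qed
  ultimately show ?thesis by (simp add: invariant_mon_def)
qed

definition gens_typeI :: "(nat \<Rightarrow> nat) \<Rightarrow> (nat \<Rightarrow> nat) \<Rightarrow> nat \<Rightarrow> nat \<Rightarrow> cpoly set" where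
  "gens_typeI a nv l k = gens_r l \<union> gens_p l k \<union> gens_q a nv l k \<union> gens_qbar a nv l k"

lemma qmono_in_gens_typeI:
  "s \<in> svecs k (alphaA a l) \<Longrightarrow> qmono (side b) a nv l k s \<in> gens_typeI a nv l k"
  by (cases b) (auto simp: gens_typeI_def gens_q_def gens_qbar_def side_def)

lemma pair_in_gens_typeI:
  assumes "(j = j' \<and> j < l) \<or> (l \<le> j \<and> l \<le> j' \<and> j < l + k \<and> j' < l + k)"
  shows "Var (Inl j) * Var (Inr j') \<in> gens_typeI a nv l k"
proof (cases "j < l")
  case True
  with assms show ?thesis by (auto simp: gens_typeI_def gens_r_def)
next
  case False
  with assms show ?thesis
    unfolding gens_typeI_def gens_p_def
    by (intro UnI1 UnI2 CollectI exI[of _ "j - l"] exI[of _ "j' - l"]) auto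
qed

lemma gens_q_qbar:
  "gens_q a nv l k \<union> gens_qbar a nv l k = (\<Union>b. qmono (side b) a nv l k ` svecs k (alphaA a l))"
  by (auto simp: gens_q_def gens_qbar_def side_def UNIV_bool)

lemma gens_typeI_invariant:
  assumes "g \<in> gens_typeI a nv l k"
  shows "\<exists>m. g = Poly_Mapping.single m 1 \<and> invariant_mon (typeI a nv l) l (l + k) m"
proof -
  consider (r) i where "i < l" "g = Var (Inl i) * Var (Inr i)"
    | (p) i j where "i < k" "j < k" "g = Var (Inl (l + i)) * Var (Inr (l + j))"
    | (q) b s where "s \<in> svecs k (alphaA a l)" "g = qmono (side b) a nv l k s"
    using assms unfolding gens_typeI_def Un_assoc gens_q_qbar by (simp add: gens_r_def gens_p_def) blast
  then show ?thesis
  proof cases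
    case r
    then show ?thesis
      by (auto simp: Var_mult_Var intro!: invariant_mon_pair_exp)
  next
    case p
    then show ?thesis
      by (auto simp: Var_mult_Var typeI_def intro!: invariant_mon_pair_exp)
  next
    case q
    then show ?thesis
      using invariant_mon_qexp qmono_side by blast
  qed
qed

section \<open>Invariant monomials of Type I are generated\<close>

lemma exists_bounded_composition:
  fixes u :: "nat \<Rightarrow> nat"
  assumes "n \<le> (\<Sum>j<k. u j)"
  shows "\<exists>s. (\<forall>j\<ge>k. s j = 0) \<and> (\<forall>j. s j \<le> u j) \<and> (\<Sum>j<k. s j) = n"
  using assms
proof (induction k arbitrary: n)
  case 0
  then show ?case by (intro exI[of _ "\<lambda>_. 0"]) auto
next
  case (Suc k)
  show ?case
  proof (cases "n \<le> (\<Sum>j<k. u j)")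
    case True
    then obtain s where "\<forall>j\<ge>k. s j = 0" "\<forall>j. s j \<le> u j" "(\<Sum>j<k. s j) = n"
      using Suc.IH by blast
    then show ?thesis by (intro exI[of _ s]) auto
  next
    case False
    define s where "s j = (if j < k then u j else if j = k then n - (\<Sum>j<k. u j) else 0)" for j
    have "(\<Sum>j<Suc k. s j) = n" using False by (simp add: s_def)
    moreover have "\<forall>j. s j \<le> u j" using Suc.prems by (auto simp: s_def)
    ultimately show ?thesis by (intro exI[of _ s]) (auto simp: s_def)
  qed
qed

text \<open>With \<open>e, f\<close> the exponents of \<open>z, \<bar>z\<close> and \<open>S = \<Sum>\<^sub>j (e\<^sub>l\<^sub>+\<^sub>j - f\<^sub>l\<^sub>+\<^sub>j) > 0\<close>, invariance reads
  \<open>a\<^sub>i (e\<^sub>i - f\<^sub>i) = n\<^sub>i S\<close>; coprimality of \<open>a\<^sub>i, n\<^sub>i\<close> gives \<open>\<alpha> | S\<close>, hence \<open>e\<^sub>i \<ge> n\<^sub>i \<alpha> / a\<^sub>i = m\<^sub>i\<close>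
  and \<open>\<Sum>\<^sub>j e\<^sub>l\<^sub>+\<^sub>j \<ge> \<alpha>\<close>.\<close>

lemma qexp_divisor:
  assumes apos: "\<forall>i<l. a i > 0" and cop: "\<forall>i<l. coprime (a i) (nv i)"
    and m: "invariant_mon (typeI a nv l) l (l + k) m"
    and pos: "0 < (\<Sum>j<k. dexp b m (l + j))"
  shows "\<exists>s\<in>svecs k (alphaA a l). Poly_Mapping.lookup (qexp b a nv l k s) \<le> Poly_Mapping.lookup m"
proof -
  define S where "S = (\<Sum>j<k. dexp b m (l + j))"
  have eq: "int (a i) * dexp b m i = int (nv i) * S" if "i < l" for i
    using m weight_typeI_eq_0_iff[OF that, where a = a and nv = nv and k = k and b = b and m = m]
    by (simp add: invariant_mon_def S_def that)
  obtain N where N: "S = int N" "0 < N"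
    using pos zero_less_imp_eq_int unfolding S_def by blast
  have "a i dvd nv i * N" if "i < l" for i
  proof -
    have "int (nv i * N) = int (a i) * dexp b m i" by (simp add: eq[OF that] N(1))
    then have "int (a i) dvd int (nv i * N)" by (metis dvd_triv_left)
    then show ?thesis by (simp only: int_dvd_int_iff)
  qed
  with cop have "alphaA a l dvd N" by (rule alphaA_dvd_if_coprime)
  then have alpha_le: "int (alphaA a l) \<le> S" using N by (simp add: dvd_imp_le)
  have mA_le: "mA a nv l i \<le> Poly_Mapping.lookup m (side b i)" if "i < l" for i
  proof -
    have "int (a i) * int (mA a nv l i) = int (nv i) * int (alphaA a l)"
      using mult_mA[OF that, of a nv] by (metis of_nat_mult)
    also have "\<dots> \<le> int (a i) * dexp b m i"
      using alpha_le eq[OF that] by (simp add: mult_left_mono)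
    finally have "int (mA a nv l i) \<le> dexp b m i" using apos that by (simp add: mult_le_cancel_left)
    then show ?thesis unfolding dexp_def by linarith
  qed
  have "S \<le> (\<Sum>j<k. int (Poly_Mapping.lookup m (side b (l + j))))"
    unfolding S_def dexp_def by (simp add: sum_subtractf sum_nonneg)
  then have "alphaA a l \<le> (\<Sum>j<k. Poly_Mapping.lookup m (side b (l + j)))"
    using alpha_le by (simp flip: of_nat_sum)
  then obtain s where s: "\<forall>j\<ge>k. s j = 0" "\<forall>j. s j \<le> Poly_Mapping.lookup m (side b (l + j))"
      "(\<Sum>j<k. s j) = alphaA a l"
    using exists_bounded_composition by blast
  have "Poly_Mapping.lookup (qexp b a nv l k s) x \<le> Poly_Mapping.lookup m x" for x
  proof (cases x rule: side_cases[where b = b])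
    case 1
    define j where "j = var_idx x"
    have "j < l \<Longrightarrow> mA a nv l j \<le> Poly_Mapping.lookup m x"
      using mA_le[of j] 1 by (simp add: j_def)
    moreover have "\<not> j < l \<Longrightarrow> s (j - l) \<le> Poly_Mapping.lookup m x"
      using s(2)[rule_format, of "j - l"] 1 by (simp add: j_def)
    moreover have "x = side b j" using 1 by (simp add: j_def)
    ultimately show ?thesis
      using lookup_qexp(1)[of b a nv l k s j] by simp
  next
    case 2
    then show ?thesis using lookup_qexp(2)[of b a nv l k s "var_idx x", folded 2] by simp
  qed
  moreover have "s \<in> svecs k (alphaA a l)" using s by (simp add: svecs_def)
  ultimately show ?thesis by (auto simp: le_fun_def)
qed

lemma qexp_nonzero:
  assumes "s \<in> svecs k (alphaA a l)" "alphaA a l > 0"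
  shows "qexp b a nv l k s \<noteq> 0"
proof
  assume "qexp b a nv l k s = 0"
  then have "s j = 0" if "j < k" for j
    using lookup_qexp(1)[of b a nv l k s "l + j"] that by simp
  then show False using assms by (simp add: svecs_def)
qed

lemma balanced_pair_divisor:
  assumes apos: "\<forall>i<l. a i > 0"
    and m: "invariant_mon (typeI a nv l) l (l + k) m" "m \<noteq> 0"
    and balanced: "(\<Sum>j<k. dexp True m (l + j)) = 0"
  obtains j j' where "0 < Poly_Mapping.lookup m (Inl j)" "0 < Poly_Mapping.lookup m (Inr j')"
    "(j = j' \<and> j < l) \<or> (l \<le> j \<and> l \<le> j' \<and> j < l + k \<and> j' < l + k)"
proof -
  have diagonal: "Poly_Mapping.lookup m (Inl i) = Poly_Mapping.lookup m (Inr i)" if "i < l" for i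
    using m(1) weight_typeI_eq_0_iff[OF that, where a = a and nv = nv and k = k and b = True and m = m]
      apos[rule_format, OF that] that balanced by (simp add: invariant_mon_def dexp_def side_def)
  have sums: "(\<Sum>j<k. Poly_Mapping.lookup m (Inl (l + j))) = (\<Sum>j<k. Poly_Mapping.lookup m (Inr (l + j)))"
    using balanced by (simp add: dexp_def side_def sum_subtractf flip: of_nat_sum)
  obtain x where x: "x \<in> Poly_Mapping.keys m" using m(2) by fastforce
  then have "var_idx x < l + k" using m(1) by (auto simp: invariant_mon_def vars_iff)
  show ?thesis
  proof (cases x)
    case (Inl j)
    show ?thesis
    proof (cases "j < l")
      case True
      then show ?thesis using that[of j j] x diagonal Inl by (simp add: in_keys_iff)
    next
      case False
      then have "(\<Sum>j<k. Poly_Mapping.lookup m (Inl (l + j))) \<noteq> 0"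
        using x Inl \<open>var_idx x < l + k\<close>
        by (auto simp: in_keys_iff var_idx_def sum_eq_0_iff intro!: bexI[of _ "j - l"])
      then obtain j' where "j' < k" "Poly_Mapping.lookup m (Inr (l + j')) \<noteq> 0"
        using sums sum.not_neutral_contains_not_neutral by (metis lessThan_iff)
      then show ?thesis
        using that[of j "l + j'"] x Inl False \<open>var_idx x < l + k\<close> by (simp add: in_keys_iff var_idx_def)
    qed
  next
    case (Inr j')
    show ?thesis
    proof (cases "j' < l")
      case True
      then show ?thesis using that[of j' j'] x diagonal Inr by (simp add: in_keys_iff)
    next
      case False
      then have "(\<Sum>j<k. Poly_Mapping.lookup m (Inr (l + j))) \<noteq> 0"
        using x Inr \<open>var_idx x < l + k\<close>
        by (auto simp: in_keys_iff var_idx_def sum_eq_0_iff intro!: bexI[of _ "j' - l"])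
      then obtain j where "j < k" "Poly_Mapping.lookup m (Inl (l + j)) \<noteq> 0"
        using sums sum.not_neutral_contains_not_neutral by (metis lessThan_iff)
      then show ?thesis
        using that[of "l + j" j'] x Inr False \<open>var_idx x < l + k\<close> by (simp add: in_keys_iff var_idx_def)
    qed
  qed
qed

lemma invariant_mon_typeI_divisor:
  assumes apos: "\<forall>i<l. a i > 0" and cop: "\<forall>i<l. coprime (a i) (nv i)"
    and m: "invariant_mon (typeI a nv l) l (l + k) m" "m \<noteq> 0"
  obtains g where "g \<noteq> 0" "Poly_Mapping.lookup g \<le> Poly_Mapping.lookup m"
    "invariant_mon (typeI a nv l) l (l + k) g" "Poly_Mapping.single g 1 \<in> gens_typeI a nv l k"
proof -
  note result = that
  have q_case: thesis if pos: "0 < (\<Sum>j<k. dexp b m (l + j))" for b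
  proof -
    obtain s where "s \<in> svecs k (alphaA a l)" "Poly_Mapping.lookup (qexp b a nv l k s) \<le> Poly_Mapping.lookup m"
      using qexp_divisor[OF apos cop m(1) pos] by blast
    then show thesis
      using qexp_nonzero alphaA_pos[OF apos] invariant_mon_qexp qmono_in_gens_typeI
      by (intro result) (simp_all add: qmono_side)
  qed
  consider "0 < (\<Sum>j<k. dexp True m (l + j))" | "0 < (\<Sum>j<k. dexp False m (l + j))"
    | "(\<Sum>j<k. dexp True m (l + j)) = 0"
    by (fastforce simp: dexp_False sum_negf)
  then show thesis
  proof cases
    case 3
    with apos m obtain j j' where j: "0 < Poly_Mapping.lookup m (Inl j)" "0 < Poly_Mapping.lookup m (Inr j')"
      and jj': "(j = j' \<and> j < l) \<or> (l \<le> j \<and> l \<le> j' \<and> j < l + k \<and> j' < l + k)"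
      by (rule balanced_pair_divisor)
    have "\<forall>i<l. typeI a nv l i j = typeI a nv l i j'"
      using jj' by (auto simp: typeI_def)
    with jj' have "invariant_mon (typeI a nv l) l (l + k) (pair_exp (Inl j) (Inr j'))"
      by (intro invariant_mon_pair_exp) auto
    moreover have "Poly_Mapping.lookup (pair_exp (Inl j) (Inr j')) \<le> Poly_Mapping.lookup m"
      using j by (auto simp: le_fun_def lookup_pair_exp)
    ultimately show thesis
      using pair_in_gens_typeI[OF jj', of a nv] by (intro result) (simp_all add: Var_mult_Var pair_exp_nonzero)
  qed (use q_case in blast)+
qed

lemma invariant_mon_typeI_in_gen_alg:
  assumes apos: "\<forall>i<l. a i > 0" and cop: "\<forall>i<l. coprime (a i) (nv i)"
    and m: "invariant_mon (typeI a nv l) l (l + k) m"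
  shows "Poly_Mapping.single m 1 \<in> gen_alg (gens_typeI a nv l k)"
  using _ m
proof (rule single_in_gen_alg_by_divisors)
  fix m' assume "invariant_mon (typeI a nv l) l (l + k) m'" "m' \<noteq> 0"
  then obtain g where "g \<noteq> 0" "Poly_Mapping.lookup g \<le> Poly_Mapping.lookup m'"
    "invariant_mon (typeI a nv l) l (l + k) g" "Poly_Mapping.single g 1 \<in> gens_typeI a nv l k"
    using invariant_mon_typeI_divisor[OF apos cop] by blast
  then show "\<exists>g. g \<noteq> 0 \<and> Poly_Mapping.lookup g \<le> Poly_Mapping.lookup m' \<and>
      invariant_mon (typeI a nv l) l (l + k) (m' - g) \<and> Poly_Mapping.single g 1 \<in> gen_alg (gens_typeI a nv l k)"
    using \<open>invariant_mon (typeI a nv l) l (l + k) m'\<close> by (blast intro: invariant_mon_diff gen_alg.gen)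
qed

section \<open>The zero fibre\<close>

lemma zero_fibre_typeI:
  assumes z: "z \<in> zero_fibre (typeI a nv l) l (l + k)" and "i < l" "a i > 0"
  shows "(cmod (z i))\<^sup>2 = real (nv i) / real (a i) * (\<Sum>j<k. (cmod (z (l + j)))\<^sup>2)"
proof -
  have "(\<Sum>j<l + k. of_int (typeI a nv l i j) * (cmod (z j))\<^sup>2) = (0::real)"
    using z \<open>i < l\<close> by (simp add: zero_fibre_def)
  moreover have "(\<Sum>j<l. of_int (typeI a nv l i j) * (cmod (z j))\<^sup>2) =
      (\<Sum>j<l. if j = i then - real (a i) * (cmod (z i))\<^sup>2 else 0)"
    by (rule sum.cong) (auto simp: typeI_def)
  ultimately have "real (a i) * (cmod (z i))\<^sup>2 = real (nv i) * (\<Sum>j<k. (cmod (z (l + j)))\<^sup>2)"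
    using \<open>i < l\<close> by (simp add: sum_lessThan_add typeI_def sum_distrib_left)
  then show ?thesis using \<open>a i > 0\<close> by (simp add: field_simps)
qed

text \<open>On the zero fibre each \<open>r\<^sub>i\<close> is the constant \<open>n\<^sub>i / a\<^sub>i\<close> times \<open>\<Sum>\<^sub>j p\<^sub>j\<^sub>,\<^sub>j\<close>.\<close>

lemma r_on_zero_fibre:
  assumes "i < l" "a i > 0"
  shows "\<exists>h\<in>gen_alg (gens_p l k \<union> gens_q a nv l k \<union> gens_qbar a nv l k).
    \<forall>z\<in>zero_fibre (typeI a nv l) l (l + k). peval (Var (Inl i) * Var (Inr i)) z = peval h z"
proof
  let ?h = "Const (of_real (real (nv i) / real (a i))) * (\<Sum>j<k. Var (Inl (l + j)) * Var (Inr (l + j)))"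
  show "?h \<in> gen_alg (gens_p l k \<union> gens_q a nv l k \<union> gens_qbar a nv l k)"
    by (intro gen_alg.mult gen_alg.const gen_alg_sum gen_alg.gen) (auto simp: gens_p_def)
  have norm_sq: "z * cnj z = complex_of_real ((cmod z)\<^sup>2)" for z
    using complex_norm_square by simp
  show "\<forall>z\<in>zero_fibre (typeI a nv l) l (l + k). peval (Var (Inl i) * Var (Inr i)) z = peval ?h z"
  proof
    fix z assume "z \<in> zero_fibre (typeI a nv l) l (l + k)"
    have "peval (Var (Inl i) * Var (Inr i)) z = of_real ((cmod (z i))\<^sup>2)"
      by (simp only: peval_mult peval_Var var_val_def sum.case norm_sq)
    also have "\<dots> = of_real (real (nv i) / real (a i) * (\<Sum>j<k. (cmod (z (l + j)))\<^sup>2))"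
      using zero_fibre_typeI[OF \<open>z \<in> _\<close> assms] by simp
    also have "\<dots> = peval ?h z"
      by (simp only: peval_mult peval_sum peval_Const peval_Var var_val_def sum.case norm_sq of_real_sum of_real_mult)
    finally show "peval (Var (Inl i) * Var (Inr i)) z = peval ?h z" .
  qed
qed

theorem proposition4p1:
  fixes a nv :: "nat \<Rightarrow> nat" and l k :: nat
  assumes "l \<ge> 1" and "k \<ge> 1"
    and "\<forall>i<l. a i > 0" and "\<forall>i<l. nv i > 0"
    and "faithful (typeI a nv l) l (l + k)"
  shows "inv_polys (typeI a nv l) l (l + k) =
           gen_alg (gens_r l \<union> gens_p l k \<union> gens_q a nv l k \<union> gens_qbar a nv l k) \<and>
         (\<forall>f\<in>inv_polys (typeI a nv l) l (l + k).
           \<exists>g\<in>gen_alg (gens_p l k \<union> gens_q a nv l k \<union> gens_qbar a nv l k).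
             \<forall>z\<in>zero_fibre (typeI a nv l) l (l + k). peval f z = peval g z)"
proof -
  have cop: "\<forall>i<l. coprime (a i) (nv i)"
    using faithful_typeI_coprime[OF assms(5)] assms(3) by blast
  have "inv_polys (typeI a nv l) l (l + k) \<subseteq> gen_alg (gens_typeI a nv l k)"
    using invariant_mon_typeI_in_gen_alg[OF assms(3) cop]
    by (auto simp: inv_polys_iff intro: in_gen_alg_if_monomials)
  moreover have "gen_alg (gens_typeI a nv l k) \<subseteq> inv_polys (typeI a nv l) l (l + k)"
    using gens_typeI_invariant single_in_inv_polys
    by (intro gen_alg_subset Const_in_inv_polys add_in_inv_polys mult_in_inv_polys) blast+
  ultimately have eq: "inv_polys (typeI a nv l) l (l + k) = gen_alg (gens_typeI a nv l k)" by blast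
  have "\<exists>h\<in>gen_alg (gens_p l k \<union> gens_q a nv l k \<union> gens_qbar a nv l k).
      \<forall>z\<in>zero_fibre (typeI a nv l) l (l + k). peval g z = peval h z" if "g \<in> gens_typeI a nv l k" for g
    using that r_on_zero_fibre assms(3) unfolding gens_typeI_def gens_r_def by (blast intro: gen_alg.gen)
  then show ?thesis
    using eq gen_alg_agree_on unfolding gens_typeI_def by blast
qed

end
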